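(* Let $\mathbf{D}$ be a VC-database (a single VC-table $\mathbf{R}$ with global condition $\Phi(\mathbf{R})$) and let $u$ be a statement that is an update $\mathrm{upd}_{\mathit{Set},\theta}$, a delete $\mathrm{del}_{\theta}$, or a constant insert $\mathrm{ins}_{t}$, with its result $u(\mathbf{D})$ on VC-tables defined as in the context. Then $\mathrm{Mod}(u(\mathbf{D}))=u(\mathrm{Mod}(\mathbf{D}))$, where $u(\mathrm{Mod}(\mathbf{D}))=\{u(D)\mid D\in\mathrm{Mod}(\mathbf{D})\}$.
   Context: Fix a universal domain $\mathbb{D}$, a schema $(A_1,\ldots,A_n)$ and a countable set of variables $\Sigma$. Symbolic expressions are built from variables, constants, $+,-,\times,\div$, conditional expressions $\text{if } e_1 \text{ then } e_2 \text{ else } e_3$, comparisons $=,\neq,<,\leq,>,\geq$, $\wedge,\vee,\neg$, $\mathbf{isnull}$, $\mathbf{true}$, $\mathbf{false}$. A VC-table $\mathbf{R}$ is a finite set of tuples $\mathbf{t}$ of arity $n$ whose entries are symbolic expressions, each with a local condition $\phi(\mathbf{R},\mathbf{t})$ (a Boolean symbolic expression); set $\phi(\mathbf{R},\mathbf{t})=\mathbf{false}$ for $\mathbf{t}\notin\mathbf{R}$. It carries a global condition $\Phi(\mathbf{R})$. An assignment $\lambda:\Sigma\to\mathbb{D}$ is extended to expressions homomorphically (operators applied to evaluated arguments, $\lambda(\text{if } e_1 \text{ then } e_2 \text{ else } e_3)=\lambda(e_2)$ if $\lambda(e_1)$ holds and $\lambda(e_3)$ otherwise), to tuples componentwise, and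 to VC-tables by $\lambda(\mathbf{R})=\{\lambda(\mathbf{t})\mid\mathbf{t}\in\mathbf{R}\wedge\lambda(\phi(\mathbf{R},\mathbf{t}))\}$. The set of possible worlds is $\mathrm{Mod}(\mathbf{R})=\{D\mid\exists\lambda:\lambda(\mathbf{R})=D\wedge\lambda(\Phi(\mathbf{R}))\}$. On concrete relations: $\mathrm{upd}_{\mathit{Set},\theta}(R)=\{\mathit{Set}(t)\mid t\in R,\theta(t)\}\cup\{t\mid t\in R,\neg\theta(t)\}$ with $\mathit{Set}=(e_1,\ldots,e_n)$, $\mathrm{del}_{\theta}(R)=\{t\in R\mid\neg\theta(t)\}$, $\mathrm{ins}_t(R)=R\cup\{t\}$. On VC-tables: for $\mathbf{t}$, $\theta(\mathbf{t})$ and $e_i(\mathbf{t})$ denote substituting each attribute reference $A_j$ by $\mathbf{t}.A_j$. Update: for each $\mathbf{t}\in\mathbf{R}$ choose fresh variables $x_{\mathbf{t},A_1},\ldots,x_{\mathbf{t},A_n}$ (distinct, not occurring in $\mathbf{R}$ or its conditions) and let $\mathbf{t}_{new}=(x_{\mathbf{t},A_1},\ldots,x_{\mathbf{t},A_n})$; then $\mathrm{upd}_{\mathit{Set},\theta}(\mathbf{R})=\{\mathbf{t}_{new}\mid\mathbf{t}\in\mathbf{R}\}$ with $\phi(\cdot,\mathbf{t}_{new})=\phi(\mathbf{R},\mathbf{t})$ and global condition $\Phi(\mathbf{R})\wedge\bigwedge_{\mathbf{t}\in\mathbf{R}}\bigwedge_{i=1}^n x_{\mathbf{t},A_i}=(\text{if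 }\theta(\mathbf{t})\text{ then }e_i(\mathbf{t})\text{ else }\mathbf{t}.A_i)$. Delete: $\mathrm{del}_\theta(\mathbf{R})=\mathbf{R}$ with local conditions $\phi(\mathbf{R},\mathbf{t})\wedge\neg\theta(\mathbf{t})$ and global condition $\Phi(\mathbf{R})$. Constant insert: $\mathrm{ins}_t(\mathbf{R})=\mathbf{R}\cup\{t\}$ with $\phi(\cdot,t)=\mathbf{true}$, other local conditions unchanged, global condition $\Phi(\mathbf{R})$. *)

theory Defs
  imports Complex_Main
begin

datatype val = Null | BoolV bool | NumV real

definition holds :: "val \<Rightarrow> bool" where
  "holds v \<longleftrightarrow> v = BoolV True"

type_synonym var = nat

text \<open>Attr j is a reference to attribute A_(j+1) (0-based index).\<close>

datatype expr =
    Var var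
  | Const val
  | Attr nat
  | Plus expr expr | Minus expr expr | Times expr expr | Divide expr expr
  | Ite expr expr expr
  | Eq expr expr | Neq expr expr | Lt expr expr | Le expr expr | Gt expr expr | Ge expr expr
  | And expr expr | Or expr expr | Not expr
  | IsNull expr
  | TrueE | FalseE

fun arith :: "(real \<Rightarrow> real \<Rightarrow> real) \<Rightarrow> val \<Rightarrow> val \<Rightarrow> val" where
  "arith f (NumV x) (NumV y) = NumV (f x y)"
| "arith f _ _ = Null"

fun divv :: "val \<Rightarrow> val \<Rightarrow> val" where
  "divv (NumV x) (NumV y) = (if y = 0 then Null else NumV (x / y))"
| "divv _ _ = Null"

fun cmp :: "(real \<Rightarrow> real \<Rightarrow> bool) \<Rightarrow> val \<Rightarrow> val \<Rightarrow> val" where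
  "cmp f (NumV x) (NumV y) = BoolV (f x y)"
| "cmp f _ _ = BoolV False"

fun eval :: "(var \<Rightarrow> val) \<Rightarrow> val list \<Rightarrow> expr \<Rightarrow> val" where
  "eval asg t (Var x) = asg x"
| "eval asg t (Const c) = c"
| "eval asg t (Attr j) = (if j < length t then t ! j else Null)"
| "eval asg t (Plus a b) = arith (+) (eval asg t a) (eval asg t b)"
| "eval asg t (Minus a b) = arith (-) (eval asg t a) (eval asg t b)"
| "eval asg t (Times a b) = arith (*) (eval asg t a) (eval asg t b)"
| "eval asg t (Divide a b) = divv (eval asg t a) (eval asg t b)"
| "eval asg t (Ite c a b) = (if holds (eval asg t c) then eval asg t a else eval asg t b)"
| "eval asg t (Eq a b) = BoolV (eval asg t a = eval asg t b)"
| "eval asg t (Neq a b) = BoolV (eval asg t a \<noteq> eval asg t b)"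
| "eval asg t (Lt a b) = cmp (\<lambda>x y. x < y) (eval asg t a) (eval asg t b)"
| "eval asg t (Le a b) = cmp (\<lambda>x y. x \<le> y) (eval asg t a) (eval asg t b)"
| "eval asg t (Gt a b) = cmp (\<lambda>x y. x > y) (eval asg t a) (eval asg t b)"
| "eval asg t (Ge a b) = cmp (\<lambda>x y. x \<ge> y) (eval asg t a) (eval asg t b)"
| "eval asg t (And a b) = BoolV (holds (eval asg t a) \<and> holds (eval asg t b))"
| "eval asg t (Or a b) = BoolV (holds (eval asg t a) \<or> holds (eval asg t b))"
| "eval asg t (Not a) = BoolV (\<not> holds (eval asg t a))"
| "eval asg t (IsNull a) = BoolV (eval asg t a = Null)"
| "eval asg t TrueE = BoolV True"
| "eval asg t FalseE = BoolV False"

abbreviation sval :: "(var \<Rightarrow> val) \<Rightarrow> expr \<Rightarrow> val" where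
  "sval asg e \<equiv> eval asg [] e"

definition ceval :: "val list \<Rightarrow> expr \<Rightarrow> val" where
  "ceval t e = eval (\<lambda>_. Null) t e"

fun vars :: "expr \<Rightarrow> var set" where
  "vars (Var x) = {x}"
| "vars (Const c) = {}"
| "vars (Attr j) = {}"
| "vars (Plus a b) = vars a \<union> vars b"
| "vars (Minus a b) = vars a \<union> vars b"
| "vars (Times a b) = vars a \<union> vars b"
| "vars (Divide a b) = vars a \<union> vars b"
| "vars (Ite c a b) = vars c \<union> vars a \<union> vars b"
| "vars (Eq a b) = vars a \<union> vars b"
| "vars (Neq a b) = vars a \<union> vars b"
| "vars (Lt a b) = vars a \<union> vars b"
| "vars (Le a b) = vars a \<union> vars b"
| "vars (Gt a b) = vars a \<union> vars b"
| "vars (Ge a b) = vars a \<union> vars b"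
| "vars (And a b) = vars a \<union> vars b"
| "vars (Or a b) = vars a \<union> vars b"
| "vars (Not a) = vars a"
| "vars (IsNull a) = vars a"
| "vars TrueE = {}"
| "vars FalseE = {}"

fun subst :: "expr list \<Rightarrow> expr \<Rightarrow> expr" where
  "subst t (Var x) = Var x"
| "subst t (Const c) = Const c"
| "subst t (Attr j) = (if j < length t then t ! j else Attr j)"
| "subst t (Plus a b) = Plus (subst t a) (subst t b)"
| "subst t (Minus a b) = Minus (subst t a) (subst t b)"
| "subst t (Times a b) = Times (subst t a) (subst t b)"
| "subst t (Divide a b) = Divide (subst t a) (subst t b)"
| "subst t (Ite c a b) = Ite (subst t c) (subst t a) (subst t b)"
| "subst t (Eq a b) = Eq (subst t a) (subst t b)"
| "subst t (Neq a b) = Neq (subst t a) (subst t b)"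
| "subst t (Lt a b) = Lt (subst t a) (subst t b)"
| "subst t (Le a b) = Le (subst t a) (subst t b)"
| "subst t (Gt a b) = Gt (subst t a) (subst t b)"
| "subst t (Ge a b) = Ge (subst t a) (subst t b)"
| "subst t (And a b) = And (subst t a) (subst t b)"
| "subst t (Or a b) = Or (subst t a) (subst t b)"
| "subst t (Not a) = Not (subst t a)"
| "subst t (IsNull a) = IsNull (subst t a)"
| "subst t TrueE = TrueE"
| "subst t FalseE = FalseE"

definition Ands :: "expr set \<Rightarrow> expr" where
  "Ands S = foldr And (SOME xs. set xs = S) TrueE"

text \<open>A VC-table: a set of symbolic tuples, a local condition for each tuple
  (values outside tups are irrelevant, playing the role of false), and a global condition.\<close>
record vctable =
  tups :: "expr list set"
  lcond :: "expr list \<Rightarrow> expr"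
  gcond :: expr

definition wf_vctable :: "nat \<Rightarrow> vctable \<Rightarrow> bool" where
  "wf_vctable n R \<longleftrightarrow> finite (tups R) \<and> (\<forall>t\<in>tups R. length t = n)"

definition inst :: "(var \<Rightarrow> val) \<Rightarrow> vctable \<Rightarrow> val list set" where
  "inst asg R = {map (sval asg) t | t. t \<in> tups R \<and> holds (sval asg (lcond R t))}"

definition Mod :: "vctable \<Rightarrow> val list set set" where
  "Mod R = {D. \<exists>asg. inst asg R = D \<and> holds (sval asg (gcond R))}"

definition vars_table :: "vctable \<Rightarrow> var set" where
  "vars_table R = (\<Union>t\<in>tups R. (\<Union>e\<in>set t. vars e) \<union> vars (lcond R t)) \<union> vars (gcond R)"

datatype stmt =
    Upd "expr list" expr
  | Del expr
  | Ins "val list"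

definition wf_stmt :: "nat \<Rightarrow> stmt \<Rightarrow> bool" where
  "wf_stmt n u = (case u of
      Upd S \<theta> \<Rightarrow> length S = n \<and> (\<forall>e\<in>set S. vars e = {}) \<and> vars \<theta> = {}
    | Del \<theta> \<Rightarrow> vars \<theta> = {}
    | Ins c \<Rightarrow> length c = n)"

fun apply_rel :: "stmt \<Rightarrow> val list set \<Rightarrow> val list set" where
  "apply_rel (Upd S \<theta>) R =
     {map (ceval t) S | t. t \<in> R \<and> holds (ceval t \<theta>)} \<union> {t \<in> R. \<not> holds (ceval t \<theta>)}"
| "apply_rel (Del \<theta>) R = {t \<in> R. \<not> holds (ceval t \<theta>)}"
| "apply_rel (Ins c) R = insert c R"

text \<open>fr t i is the fresh variable x_{t,A_(i+1)} chosen for tuple t.\<close>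
definition fresh_choice :: "nat \<Rightarrow> vctable \<Rightarrow> (expr list \<Rightarrow> nat \<Rightarrow> var) \<Rightarrow> bool" where
  "fresh_choice n R fr \<longleftrightarrow>
     inj_on (\<lambda>(t, i). fr t i) (tups R \<times> {..<n}) \<and>
     (\<forall>t\<in>tups R. \<forall>i<n. fr t i \<notin> vars_table R)"

definition newt :: "nat \<Rightarrow> (expr list \<Rightarrow> nat \<Rightarrow> var) \<Rightarrow> expr list \<Rightarrow> expr list" where
  "newt n fr t = map (\<lambda>i. Var (fr t i)) [0..<n]"

definition upd_vc :: "(expr list \<Rightarrow> nat \<Rightarrow> var) \<Rightarrow> expr list \<Rightarrow> expr \<Rightarrow> vctable \<Rightarrow> vctable" where
  "upd_vc fr S \<theta> R =
     (let n = length S in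
      \<lparr> tups = newt n fr ` tups R,
        lcond = (\<lambda>s. if \<exists>t\<in>tups R. newt n fr t = s
                      then lcond R (SOME t. t \<in> tups R \<and> newt n fr t = s) else FalseE),
        gcond = And (gcond R)
                  (Ands {Eq (Var (fr t i)) (Ite (subst t \<theta>) (subst t (S ! i)) (t ! i))
                         | t i. t \<in> tups R \<and> i < n}) \<rparr>)"

definition del_vc :: "expr \<Rightarrow> vctable \<Rightarrow> vctable" where
  "del_vc \<theta> R = R \<lparr> lcond := (\<lambda>t. And (lcond R t) (Not (subst t \<theta>))) \<rparr>"

definition ins_vc :: "val list \<Rightarrow> vctable \<Rightarrow> vctable" where
  "ins_vc c R = R \<lparr> tups := insert (map Const c) (tups R),
                    lcond := (lcond R)(map Const c := TrueE) \<rparr>"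

fun apply_vc :: "(expr list \<Rightarrow> nat \<Rightarrow> var) \<Rightarrow> stmt \<Rightarrow> vctable \<Rightarrow> vctable" where
  "apply_vc fr (Upd S \<theta>) R = upd_vc fr S \<theta> R"
| "apply_vc fr (Del \<theta>) R = del_vc \<theta> R"
| "apply_vc fr (Ins c) R = ins_vc c R"

end

theory Submission
  imports Defs
begin

text \<open>Deletion only strengthens local conditions and a constant insert adds a tuple that
  every assignment evaluates to itself, so both commute with every assignment \<open>\<lambda>\<close>.
  For an update, the new global condition says exactly that each fresh tuple evaluates to the
  updated value of its old tuple; conversely, since the fresh variables are distinct and do not
  occur in \<open>R\<close>, every assignment satisfying \<open>\<Phi>(R)\<close> extends to one that
  also satisfies these equations without changing \<open>\<lambda>(R)\<close>.\<close>

lemma eval_cong_vars: "(\<forall>x\<in>vars e. a x = b x) \<Longrightarrow> eval a t e = eval b t e"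
  by (induction e) auto

lemma sval_subst: "vars e = {} \<Longrightarrow> sval asg (subst t e) = ceval (map (sval asg) t) e"
  by (induction e) (auto simp: ceval_def)

lemma holds_foldr_And: "holds (eval a t (foldr And es TrueE)) \<longleftrightarrow> (\<forall>e\<in>set es. holds (eval a t e))"
  by (induction es) (auto simp: holds_def)

lemma holds_Ands:
  assumes "finite E"
  shows "holds (eval a t (Ands E)) \<longleftrightarrow> (\<forall>e\<in>E. holds (eval a t e))"
proof -
  have "set (SOME es. set es = E) = E"
    using finite_list[OF assms] by (rule someI_ex)
  then show ?thesis
    unfolding Ands_def by (metis holds_foldr_And)
qed

lemma inst_cong_vars_table:
  assumes "\<forall>x\<in>vars_table R. a x = b x"
  shows "inst a R = inst b R"
proof -
  have "map (sval a) t = map (sval b) t" "sval a (lcond R t) = sval b (lcond R t)"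
    if "t \<in> tups R" for t
    using that assms by (auto simp: vars_table_def intro!: eval_cong_vars)
  then show ?thesis
    unfolding inst_def by (metis (no_types, lifting))
qed

lemma Mod_eq_image_if_inst_eq:
  assumes "\<And>asg. inst asg R' = f (inst asg R)" and "gcond R' = gcond R"
  shows "Mod R' = f ` Mod R"
  unfolding Mod_def using assms by auto

lemma Mod_del_vc:
  assumes "vars \<theta> = {}"
  shows "Mod (del_vc \<theta> R) = apply_rel (Del \<theta>) ` Mod R"
proof (rule Mod_eq_image_if_inst_eq)
  show "inst asg (del_vc \<theta> R) = apply_rel (Del \<theta>) (inst asg R)" for asg
    unfolding inst_def del_vc_def using sval_subst[OF assms] by (auto simp: holds_def)
qed (simp add: del_vc_def)

lemma Mod_ins_vc: "Mod (ins_vc c R) = apply_rel (Ins c) ` Mod R"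
proof (rule Mod_eq_image_if_inst_eq)
  fix asg
  have const: "map (sval asg) (map Const c) = c"
    by (induction c) auto
  show "inst asg (ins_vc c R) = apply_rel (Ins c) (inst asg R)"
    unfolding inst_def ins_vc_def using const by (auto simp: holds_def) (metis const)
qed (simp add: ins_vc_def)

definition upd_tuple :: "expr list \<Rightarrow> expr \<Rightarrow> val list \<Rightarrow> val list" where
  "upd_tuple S \<theta> x = (if holds (ceval x \<theta>) then map (ceval x) S else x)"

lemma apply_rel_Upd: "apply_rel (Upd S \<theta>) X = upd_tuple S \<theta> ` X"
  unfolding upd_tuple_def by auto

lemma length_upd_tuple: "length x = length S \<Longrightarrow> length (upd_tuple S \<theta> x) = length S"
  by (simp add: upd_tuple_def)

lemma nth_upd_tuple:
  "i < length x \<Longrightarrow> i < length S \<Longrightarrow>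
    upd_tuple S \<theta> x ! i = (if holds (ceval x \<theta>) then ceval x (S ! i) else x ! i)"
  by (simp add: upd_tuple_def)

lemma map_sval_newt_eq_iff:
  "length x = n \<Longrightarrow> map (sval asg) (newt n fr t) = x \<longleftrightarrow> (\<forall>i<n. asg (fr t i) = x ! i)"
  by (auto simp: newt_def list_eq_iff_nth_eq)

lemma holds_gcond_upd_vc:
  assumes wf: "wf_vctable (length S) R" and ws: "wf_stmt (length S) (Upd S \<theta>)"
  shows "holds (sval asg (gcond (upd_vc fr S \<theta> R))) \<longleftrightarrow>
    holds (sval asg (gcond R)) \<and>
    (\<forall>t\<in>tups R. map (sval asg) (newt (length S) fr t) = upd_tuple S \<theta> (map (sval asg) t))"
proof -
  let ?n = "length S"
  let ?P = "tups R \<times> {..<?n}"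
  let ?eq = "\<lambda>(t, i). Eq (Var (fr t i)) (Ite (subst t \<theta>) (subst t (S ! i)) (t ! i))"
  have E: "{Eq (Var (fr t i)) (Ite (subst t \<theta>) (subst t (S ! i)) (t ! i)) | t i. t \<in> tups R \<and> i < ?n}
      = ?eq ` ?P"
    by auto
  have "finite ?P"
    using wf by (simp add: wf_vctable_def)
  then have "holds (sval asg (Ands (?eq ` ?P))) \<longleftrightarrow> (\<forall>p\<in>?P. holds (sval asg (?eq p)))"
    by (simp add: holds_Ands)
  also have "\<dots> \<longleftrightarrow> (\<forall>t\<in>tups R. \<forall>i<?n. asg (fr t i) = upd_tuple S \<theta> (map (sval asg) t) ! i)"
    using wf ws by (auto simp: holds_def sval_subst nth_upd_tuple wf_vctable_def wf_stmt_def)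
  also have "\<dots> \<longleftrightarrow>
      (\<forall>t\<in>tups R. map (sval asg) (newt ?n fr t) = upd_tuple S \<theta> (map (sval asg) t))"
    using wf by (simp add: map_sval_newt_eq_iff length_upd_tuple wf_vctable_def)
  finally show ?thesis
    unfolding upd_vc_def Let_def E by (simp add: holds_def)
qed

lemma inj_on_newt:
  assumes "fresh_choice n R fr" and "wf_vctable n R"
  shows "inj_on (newt n fr) (tups R)"
proof (rule inj_onI)
  fix t t' assume t: "t \<in> tups R" "t' \<in> tups R" and eq: "newt n fr t = newt n fr t'"
  show "t = t'"
  proof (cases "n = 0")
    case True
    then have "length t = 0" "length t' = 0"
      using t assms(2) by (auto simp: wf_vctable_def)
    then show ?thesis
      by simp
  next
    case False
    then have fr_eq: "fr t 0 = fr t' 0"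
      using arg_cong[OF eq, of "\<lambda>s. s ! 0"] by (simp add: newt_def)
    have "inj_on (\<lambda>(t, i). fr t i) (tups R \<times> {..<n})"
      using assms(1) by (simp add: fresh_choice_def)
    then have "(t, 0) = (t', 0::nat)"
      by (rule inj_onD) (use fr_eq t False in auto)
    then show ?thesis
      by simp
  qed
qed

lemma inst_upd_vc:
  assumes "wf_vctable (length S) R" and "fresh_choice (length S) R fr"
  shows "inst asg (upd_vc fr S \<theta> R) =
    (\<lambda>t. map (sval asg) (newt (length S) fr t)) ` {t \<in> tups R. holds (sval asg (lcond R t))}"
proof -
  let ?new = "newt (length S) fr"
  have tups: "tups (upd_vc fr S \<theta> R) = ?new ` tups R"
    by (simp add: upd_vc_def Let_def)
  have lcond: "lcond (upd_vc fr S \<theta> R) (?new t) = lcond R t" if "t \<in> tups R" for t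
  proof -
    have "(SOME t'. t' \<in> tups R \<and> ?new t' = ?new t) = t"
      using inj_on_newt[OF assms(2,1)] that by (auto dest: inj_onD)
    then show ?thesis
      using that by (auto simp: upd_vc_def Let_def)
  qed
  then show ?thesis
    unfolding inst_def tups by (auto simp: lcond)
qed

lemma inst_upd_vc_eq_image:
  assumes "wf_vctable (length S) R" and "fresh_choice (length S) R fr"
    and "\<forall>t\<in>tups R. map (sval asg) (newt (length S) fr t) = upd_tuple S \<theta> (map (sval asg) t)"
  shows "inst asg (upd_vc fr S \<theta> R) = upd_tuple S \<theta> ` inst asg R"
proof -
  let ?T = "{t \<in> tups R. holds (sval asg (lcond R t))}"
  have "inst asg (upd_vc fr S \<theta> R) = (\<lambda>t. map (sval asg) (newt (length S) fr t)) ` ?T"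
    using inst_upd_vc[OF assms(1,2)] .
  also have "\<dots> = upd_tuple S \<theta> ` map (sval asg) ` ?T"
    using assms(3) by (auto simp: image_image intro!: image_cong)
  also have "map (sval asg) ` ?T = inst asg R"
    by (auto simp: inst_def)
  finally show ?thesis .
qed

lemma extend_assignment_injective:
  assumes "inj_on h P" and "h ` P \<inter> V = {}"
  obtains a' where "\<forall>x\<in>V. a' x = a x" and "\<forall>p\<in>P. a' (h p) = g p"
proof
  let ?a' = "\<lambda>x. if x \<in> h ` P then g (the_inv_into P h x) else a x"
  show "\<forall>x\<in>V. ?a' x = a x"
    using assms(2) by auto
  show "\<forall>p\<in>P. ?a' (h p) = g p"
    using assms(1) by (simp add: the_inv_into_f_f)
qed

lemma Mod_upd_vc:
  assumes wf: "wf_vctable (length S) R" and ws: "wf_stmt (length S) (Upd S \<theta>)"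
    and fc: "fresh_choice (length S) R fr"
  shows "Mod (upd_vc fr S \<theta> R) = apply_rel (Upd S \<theta>) ` Mod R"
proof (intro equalityI subsetI)
  fix D assume "D \<in> Mod (upd_vc fr S \<theta> R)"
  then obtain asg where D: "D = inst asg (upd_vc fr S \<theta> R)"
    and "holds (sval asg (gcond (upd_vc fr S \<theta> R)))"
    unfolding Mod_def by blast
  then have "holds (sval asg (gcond R))"
    and "\<forall>t\<in>tups R. map (sval asg) (newt (length S) fr t) = upd_tuple S \<theta> (map (sval asg) t)"
    using holds_gcond_upd_vc[OF wf ws] by auto
  moreover from this have "D = upd_tuple S \<theta> ` inst asg R"
    using D inst_upd_vc_eq_image[OF wf fc] by simp
  ultimately show "D \<in> apply_rel (Upd S \<theta>) ` Mod R"
    unfolding apply_rel_Upd Mod_def by blast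
next
  fix D assume "D \<in> apply_rel (Upd S \<theta>) ` Mod R"
  then obtain asg where D: "D = upd_tuple S \<theta> ` inst asg R" and gcond: "holds (sval asg (gcond R))"
    unfolding Mod_def apply_rel_Upd by blast
  let ?n = "length S"
  let ?P = "tups R \<times> {..<?n}"
  have "inj_on (\<lambda>(t, i). fr t i) ?P" and "(\<lambda>(t, i). fr t i) ` ?P \<inter> vars_table R = {}"
    using fc by (auto simp: fresh_choice_def)
  then obtain asg' where agree: "\<forall>x\<in>vars_table R. asg' x = asg x"
    and fresh: "\<forall>p\<in>?P. asg' ((\<lambda>(t, i). fr t i) p) =
      (\<lambda>(t, i). upd_tuple S \<theta> (map (sval asg) t) ! i) p"
    by (rule extend_assignment_injective)
  have old: "map (sval asg') t = map (sval asg) t" if "t \<in> tups R" for t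
    using that agree by (auto simp: vars_table_def intro!: eval_cong_vars)
  have new: "map (sval asg') (newt ?n fr t) = upd_tuple S \<theta> (map (sval asg') t)" if "t \<in> tups R" for t
    using that fresh wf
    by (auto simp: old map_sval_newt_eq_iff length_upd_tuple wf_vctable_def)
  have "sval asg' (gcond R) = sval asg (gcond R)"
    using agree by (auto simp: vars_table_def intro!: eval_cong_vars)
  then have "holds (sval asg' (gcond (upd_vc fr S \<theta> R)))"
    using gcond new holds_gcond_upd_vc[OF wf ws] by simp
  moreover have "inst asg' (upd_vc fr S \<theta> R) = D"
    using inst_upd_vc_eq_image[OF wf fc] new inst_cong_vars_table[OF agree] D by simp
  ultimately show "D \<in> Mod (upd_vc fr S \<theta> R)"
    unfolding Mod_def by blast
qed

theorem mainTheorem2: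
  fixes n :: nat and R :: vctable and u :: stmt and fr :: "expr list \<Rightarrow> nat \<Rightarrow> var"
  assumes "wf_vctable n R"
    and "wf_stmt n u"
    and "\<forall>S \<theta>. u = Upd S \<theta> \<longrightarrow> fresh_choice n R fr"
  shows "Mod (apply_vc fr u R) = apply_rel u ` Mod R"
proof (cases u)
  case (Upd S \<theta>)
  then have "n = length S"
    using assms(2) by (simp add: wf_stmt_def)
  then show ?thesis
    using Mod_upd_vc assms Upd by simp
next
  case (Del \<theta>)
  then show ?thesis
    using Mod_del_vc assms(2) by (simp add: wf_stmt_def)
next
  case (Ins c)
  then show ?thesis
    using Mod_ins_vc by simp
qed

end
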